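(* In the Standing Setup with $R=-v(X-w)$ ($v,w\in\mathbb F$), for every $h\in\mathbb Z$: $$d_{h-1}d_hd_{h+1}=-v(e_h+w),$$ $$e_h+e_{h+1}+v_h=\frac{v}{d_hd_{h+1}},\qquad e_he_{h+1}-w_h=-\frac{vw}{d_hd_{h+1}} .$$
   Context: Standing Setup. $\mathbb F$ is a field of characteristic not $2$ or $3$; $f,g\in\mathbb F$; $A=X^3+fX+g\in\mathbb F[X]$; $R\in\mathbb F[X]$ is a polynomial of degree at most $2$; $D=A^2+4R$; $Y$ satisfies $Y^2=D(X)$, $Z=\tfrac12(Y+A)$ and $\overline Z=\tfrac12(-Y+A)$, so $Z+\overline Z=A$ and $Z\overline Z=-R$. We are given sequences $(u_h),(v_h),(w_h),(d_h),(e_h)$ of elements of $\mathbb F$ indexed by $h\in\mathbb Z$, with all $u_h\neq0$, such that for every $h\in\mathbb Z$ the following two identities hold in $\mathbb F[X]$: (i) $A+d_h(X+e_h)+d_{h+1}(X+e_{h+1})=(X+v_h)(X^2-v_hX+w_h)$; (ii) $-u_hu_{h+1}(X^2-v_hX+w_h)(X^2-v_{h+1}X+w_{h+1})=d_{h+1}^2(X+e_{h+1})^2+d_{h+1}(X+e_{h+1})A-R$. (These say that $Z_h=\bigl(Z+d_h(X+e_h)\bigr)/\bigl(u_h(X^2-v_hX+w_h)\bigr)$ are consecutive complete quotients of a continued fraction expansion with partial quotients $(X+v_h)/u_h$.) *)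

theory Defs
  imports "HOL-Computational_Algebra.Polynomial"
begin

end

theory Submission
  imports Defs
begin

text \<open>Write q_h = X^2 - v_h X + w_h. Reading d_(h+1) = -u_h u_(h+1) off the X^4 coefficient of (ii)
  and eliminating A between (i) and (ii) gives
  d_h d_(h+1) (X + e_h)(X + e_(h+1)) + R = q_h d_(h+1) ((X + e_(h+1))(X + v_h) - q_(h+1)).
  The left side has degree at most 2, so the second factor on the right is the constant
  c_h = d_h d_(h+1) + R_2, whence d_h d_(h+1) (X + e_h)(X + e_(h+1)) + R = c_h q_h.
  Its coefficients of X and 1 give the formulas for e_h + e_(h+1) + v_h and e_h e_(h+1) - w_h.
  Evaluating it at X = -e_h, where the same constancy one step back gives d_h q_h(-e_h) = -c_(h-1),
  yields d_h R(-e_h) = -c_(h-1) c_h, which for linear R is the formula for d_(h-1) d_h d_(h+1).\<close>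

lemma degree_mult_le_imp_const:
  fixes p c :: "'a :: idom poly"
  assumes "p \<noteq> 0" and "degree (p * c) \<le> degree p"
  shows "c = [:coeff c 0:]"
proof (cases "c = 0")
  case False
  with assms have "degree c = 0" by (simp add: degree_mult_eq)
  then show ?thesis by (rule degree_0_id[symmetric])
qed simp

lemma smult_eq_const_mult: "smult c p = [:c:] * p"
  by simp

locale complete_quotients =
  fixes A R :: "'a :: field poly"
    and u v w d e :: "int \<Rightarrow> 'a"
  assumes degree_R: "degree R \<le> 2"
    and u_nonzero: "u h \<noteq> 0"
    and partial_quotient: "A + smult (d h) [:e h, 1:] + smult (d (h+1)) [:e (h+1), 1:]
                 = [:v h, 1:] * [:w h, - v h, 1:]"
    and denominator_product: "- smult (u h * u (h+1)) ([:w h, - v h, 1:] * [:w (h+1), - v (h+1), 1:])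
                 = smult ((d (h+1))\<^sup>2) ([:e (h+1), 1:]\<^sup>2) + smult (d (h+1)) [:e (h+1), 1:] * A - R"
begin

abbreviation den :: "int \<Rightarrow> 'a poly" where "den h \<equiv> [:w h, - v h, 1:]"
abbreviation offset :: "int \<Rightarrow> 'a poly" where "offset h \<equiv> [:e h, 1:]"
abbreviation pquot :: "int \<Rightarrow> 'a poly" where "pquot h \<equiv> [:v h, 1:]"

lemma A_from_partial_quotient: "A = pquot h * den h - smult (d (h+1)) (offset (h+1)) - smult (d h) (offset h)"
  by (simp only: partial_quotient[of h, symmetric] add_diff_cancel_right')

lemma denominator_product_without_A:
  "- smult (u h * u (h+1)) (den h * den (h+1))
     = smult (d (h+1)) (offset (h+1)) * (pquot h * den h - smult (d h) (offset h)) - R"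
  using denominator_product[of h] unfolding A_from_partial_quotient[of h] by (simp add: algebra_simps power2_eq_square)

lemma d_succ_eq: "d (h+1) = - (u h * u (h+1))"
proof -
  have "coeff R 4 = 0" using degree_R by (simp add: coeff_eq_0)
  then show ?thesis
    using arg_cong[OF denominator_product_without_A[of h], of "\<lambda>p. coeff p 4"]
    by (simp add: numeral_eq_Suc)
qed

lemma d_nonzero: "d h \<noteq> 0"
  using d_succ_eq[of "h-1"] u_nonzero by simp

lemma offset_product_plus_R_eq_den_mult:
  "smult (d h * d (h+1)) (offset h * offset (h+1)) + R
     = den h * smult (d (h+1)) (offset (h+1) * pquot h - den (h+1))"
proof -
  have "smult (d (h+1)) (den h * den (h+1))
     = smult (d (h+1)) (offset (h+1)) * (pquot h * den h - smult (d h) (offset h)) - R"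
    using denominator_product_without_A[of h] unfolding d_succ_eq[of h] by simp
  then show ?thesis
    unfolding smult_smult[symmetric] by (simp only: smult_eq_const_mult) algebra
qed

lemma den_succ_recurrence:
  "smult (d (h+1)) (offset (h+1) * pquot h - den (h+1)) = [:d h * d (h+1) + coeff R 2:]"
proof -
  let ?c = "smult (d (h+1)) (offset (h+1) * pquot h - den (h+1))"
  have "degree (den h * ?c) \<le> degree (den h)"
    unfolding offset_product_plus_R_eq_den_mult[symmetric] using degree_R
    by (auto intro!: degree_add_le order.trans[OF degree_smult_le])
  then have c_const: "?c = [:coeff ?c 0:]"
    by (rule degree_mult_le_imp_const[of "den h", rotated]) simp
  have "d h * d (h+1) + coeff R 2 = coeff (den h * ?c) 2"
    using arg_cong[OF offset_product_plus_R_eq_den_mult[of h], of "\<lambda>p. coeff p 2"]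
    by (simp add: numeral_eq_Suc)
  also have "\<dots> = coeff ?c 0"
    by (subst c_const) (simp add: numeral_eq_Suc)
  finally show ?thesis
    using c_const by simp
qed

lemma offset_product_plus_R:
  "smult (d h * d (h+1)) (offset h * offset (h+1)) + R = smult (d h * d (h+1) + coeff R 2) (den h)"
  unfolding offset_product_plus_R_eq_den_mult den_succ_recurrence by simp

lemma offset_sum_eq:
  "d h * d (h+1) * (e h + e (h+1)) + coeff R 1 = - (d h * d (h+1) + coeff R 2) * v h"
  using arg_cong[OF offset_product_plus_R[of h], of "\<lambda>p. coeff p 1"]
  by (simp add: algebra_simps)

lemma offset_product_eq:
  "d h * d (h+1) * e h * e (h+1) + coeff R 0 = (d h * d (h+1) + coeff R 2) * w h"
  using arg_cong[OF offset_product_plus_R[of h], of "\<lambda>p. coeff p 0"]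
  by (simp add: algebra_simps)

lemma d_mult_poly_R_at_offset_root:
  "d h * poly R (- e h) = - (d (h-1) * d h + coeff R 2) * (d h * d (h+1) + coeff R 2)"
proof -
  define P where "P = poly (den h) (- e h)"
  have offset_root: "poly (offset h) (- e h) = 0"
    by simp
  have R_root: "poly R (- e h) = (d h * d (h+1) + coeff R 2) * P"
    using arg_cong[OF offset_product_plus_R[of h], of "\<lambda>p. poly p (- e h)"] unfolding P_def
    by (simp only: poly_add poly_smult poly_mult offset_root mult_zero_left mult_zero_right add_0)
  have "poly (smult (d h) (offset h * pquot (h-1) - den h)) (- e h) = - (d h * P)"
    unfolding P_def
    by (simp only: poly_smult poly_diff poly_mult offset_root mult_zero_left diff_0 mult_minus_right)
  then have den_root: "d (h-1) * d h + coeff R 2 = - (d h * P)"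
    unfolding den_succ_recurrence[of "h-1", unfolded diff_add_cancel] by simp
  show ?thesis
    unfolding R_root den_root by (simp add: algebra_simps)
qed

end

theorem mainTheorem7:
  fixes f g vR wR :: "'a :: field"
    and u v w d e :: "int \<Rightarrow> 'a"
    and A R :: "'a poly"
  assumes char2: "(2::'a) \<noteq> 0" and char3: "(3::'a) \<noteq> 0"
    and A_def: "A = [:g, f, 0, 1:]"
    and R_def: "R = - smult vR ([:0, 1:] - [:wR:])"
    and u_nz: "\<And>h. u h \<noteq> 0"
    and i: "\<And>h. A + smult (d h) [:e h, 1:] + smult (d (h+1)) [:e (h+1), 1:]
                 = [:v h, 1:] * [:w h, - v h, 1:]"
    and ii: "\<And>h. - smult (u h * u (h+1)) ([:w h, - v h, 1:] * [:w (h+1), - v (h+1), 1:])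
                 = smult ((d (h+1))\<^sup>2) ([:e (h+1), 1:]\<^sup>2) + smult (d (h+1)) [:e (h+1), 1:] * A - R"
  shows "d (h-1) * d h * d (h+1) = - vR * (e h + wR)
       \<and> e h + e (h+1) + v h = vR / (d h * d (h+1))
       \<and> e h * e (h+1) - w h = - (vR * wR) / (d h * d (h+1))"
proof -
  interpret complete_quotients A R u v w d e
    using u_nz i ii by unfold_locales (simp_all add: R_def)
  have R_coeffs: "coeff R 2 = 0" "coeff R 1 = - vR" "coeff R 0 = vR * wR"
    and R_at_root: "poly R (- e h) = vR * (e h + wR)"
    by (simp_all add: R_def algebra_simps numeral_eq_Suc)
  have "d h * (- vR * (e h + wR)) = - (d h * poly R (- e h))"
    unfolding R_at_root by simp
  also have "\<dots> = d h * (d (h-1) * d h * d (h+1))"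
    unfolding d_mult_poly_R_at_offset_root R_coeffs by (simp add: algebra_simps)
  finally have "d (h-1) * d h * d (h+1) = - vR * (e h + wR)"
    using d_nonzero[of h] by (metis mult_left_cancel)
  moreover have "d h * d (h+1) \<noteq> 0"
    using d_nonzero by simp
  ultimately show ?thesis
    using offset_sum_eq[of h] offset_product_eq[of h] unfolding R_coeffs
    by (simp add: field_simps)
qed

end
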